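(* Let $\alpha\in(0,\infty)\setminus\{1\}$. Consider a finite set of flows $\mathcal K$, each flow $k$ having rate $r_k>0$ and being associated to a beam $v_k\in V$; let $\mathcal K(v)=\{k: v_k=v\}$ and assume $\mathcal K(v)\neq\emptyset$ for every $v\in V$. Consider the problem $$\text{maximize } \sum_{v\in V}\sum_{k\in\mathcal K(v)} f_\alpha(r_k\gamma_v\delta_k)\quad\text{subject to } \gamma\in\mathrm{conv}(\mathcal Z),\ \delta\in\Delta,$$ where $f_\alpha(x)=x^{1-\alpha}/(1-\alpha)$, $\Delta=\{\delta\in[0,1]^{\mathcal K}: \sum_{k\in\mathcal K(v)}\delta_k=1 \ \forall v\in V\}$. Define $\phi_v=\big(\sum_{k\in\mathcal K(v)} r_k^{1/\alpha-1}\big)^{\alpha}$ and define $\theta_v,\kappa^\star_v$ recursively from the leaves upward: for $v$ with children set $C(v)=\{v':(v,v')\in E\}$ let $S_v=\sum_{v'\in C(v)}\theta_{v'}$ ($S_v=0$ for a leaf), $$\kappa^\star_v=\Big[1+\Big(\frac{1-\alpha}{\phi_v}S_v\Big)^{1/\alpha}\Big]^{-1},\qquad \theta_v=(\kappa^\star_v)^{1-\alpha}\frac{\phi_v}{1-\alpha}+(1-\kappa^\star_v)^{1-\alpha}S_v$$ (so that for a leaf $\kappa^\star_v=1$ and $\theta_v=\phi_v/(1-\alpha)$). Then the problem has a unique optimal solution $(\delta^\star,\gamma^\star)$, given by $$\delta^\star_k=\frac{r_k^{1/\alpha-1}}{\sum_{k'\in\mathcal K(v_k)} r_{k'}^{1/\alpha-1}},\qquad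 \gamma^\star_v=\kappa^\star_v\prod_{v'\in\mathcal A(v)}(1-\kappa^\star_{v'}).$$
   Context: $G=(V,E)$ is a finite directed rooted tree with vertex set $V=\{1,\dots,|V|\}$ and root $1$, edges oriented from parent to child. For $v\in V$: $\mathcal A(v)$ is the set of strict ancestors of $v$, $\bar{\mathcal A}(v)=\mathcal A(v)\cup\{v\}$, $\mathcal D(v)$ is the set of strict descendants of $v$, $\bar{\mathcal D}(v)=\mathcal D(v)\cup\{v\}$, and $d(v)$ is the number of children of $v$. $\mathcal Z=\{z\in\{0,1\}^{V}: z_v z_{v'}=0 \text{ for all } v\in V,\ v'\in\mathcal A(v)\}$ (admissible sets of simultaneously active beams) and $\mathrm{conv}(\mathcal Z)$ is its convex hull. $\gamma_v$ is the fraction of time beam $v$ is active and $\delta_k$ the fraction of beam $v_k$'s active time given to flow $k$; flow $k$ obtains throughput $r_k\gamma_{v_k}\delta_k$. *)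

theory Defs
  imports "HOL-Analysis.Analysis" "HOL-Library.Extended_Real"
begin

text \<open>Vertex set V = {1..n}, root 1, edges E oriented parent to child.\<close>
definition rooted_tree :: "nat \<Rightarrow> (nat \<times> nat) set \<Rightarrow> bool" where
  "rooted_tree n E \<longleftrightarrow> n \<ge> 1 \<and> E \<subseteq> {1..n} \<times> {1..n}
     \<and> (\<forall>u. (u, 1) \<notin> E)
     \<and> (\<forall>v\<in>{1..n}. v \<noteq> 1 \<longrightarrow> (\<exists>!u. (u, v) \<in> E))
     \<and> (\<forall>v\<in>{1..n}. (1, v) \<in> E\<^sup>*)"

definition anc :: "(nat \<times> nat) set \<Rightarrow> nat \<Rightarrow> nat set" where
  "anc E v = {u. (u, v) \<in> E\<^sup>+}"

definition children :: "(nat \<times> nat) set \<Rightarrow> nat \<Rightarrow> nat set" where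
  "children E v = {v'. (v, v') \<in> E}"

definition Zset :: "nat \<Rightarrow> (nat \<times> nat) set \<Rightarrow> (nat \<Rightarrow> real) set" where
  "Zset n E = {z. (\<forall>v\<in>{1..n}. z v \<in> {0, 1}) \<and> (\<forall>v. v \<notin> {1..n} \<longrightarrow> z v = 0)
                 \<and> (\<forall>v\<in>{1..n}. \<forall>v'\<in>anc E v. z v * z v' = 0)}"

text \<open>gamma (restricted to V) lies in the convex hull of Z (a finite set):
  it is a convex combination of the elements of Z.\<close>
definition in_convZ :: "nat \<Rightarrow> (nat \<times> nat) set \<Rightarrow> (nat \<Rightarrow> real) \<Rightarrow> bool" where
  "in_convZ n E \<gamma> \<longleftrightarrow> (\<exists>\<mu>. (\<forall>z\<in>Zset n E. \<mu> z \<ge> 0) \<and> (\<Sum>z\<in>Zset n E. \<mu> z) = 1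
      \<and> (\<forall>v\<in>{1..n}. \<gamma> v = (\<Sum>z\<in>Zset n E. \<mu> z * z v)))"

definition flows :: "'k set \<Rightarrow> ('k \<Rightarrow> nat) \<Rightarrow> nat \<Rightarrow> 'k set" where
  "flows K vb v = {k\<in>K. vb k = v}"

definition in_Delta :: "nat \<Rightarrow> 'k set \<Rightarrow> ('k \<Rightarrow> nat) \<Rightarrow> ('k \<Rightarrow> real) \<Rightarrow> bool" where
  "in_Delta n K vb \<delta> \<longleftrightarrow> (\<forall>k\<in>K. 0 \<le> \<delta> k \<and> \<delta> k \<le> 1)
      \<and> (\<forall>v\<in>{1..n}. (\<Sum>k\<in>flows K vb v. \<delta> k) = 1)"

definition f_alpha :: "real \<Rightarrow> real \<Rightarrow> ereal" where
  "f_alpha \<alpha> x = (if x = 0 \<and> \<alpha> > 1 then -\<infinity> else ereal (x powr (1 - \<alpha>) / (1 - \<alpha>)))"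

definition objective :: "real \<Rightarrow> nat \<Rightarrow> 'k set \<Rightarrow> ('k \<Rightarrow> nat) \<Rightarrow> ('k \<Rightarrow> real)
    \<Rightarrow> ('k \<Rightarrow> real) \<Rightarrow> (nat \<Rightarrow> real) \<Rightarrow> ereal" where
  "objective \<alpha> n K vb r \<delta> \<gamma> =
     (\<Sum>v\<in>{1..n}. \<Sum>k\<in>flows K vb v. f_alpha \<alpha> (r k * \<gamma> v * \<delta> k))"

definition phi :: "real \<Rightarrow> 'k set \<Rightarrow> ('k \<Rightarrow> nat) \<Rightarrow> ('k \<Rightarrow> real) \<Rightarrow> nat \<Rightarrow> real" where
  "phi \<alpha> K vb r v = (\<Sum>k\<in>flows K vb v. r k powr (1 / \<alpha> - 1)) powr \<alpha>"

end

theory Submission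
  imports Defs
begin

text \<open>For fixed \<open>\<gamma>\<close> the objective separates over beams, and on the simplex of beam \<open>v\<close> the
  concave sum \<open>\<Sum>k. f\<^sub>\<alpha>(r\<^sub>k \<gamma>\<^sub>v \<delta>\<^sub>k)\<close> is maximised exactly at \<open>\<delta>\<^sup>\<star>\<close>, with value
  \<open>\<phi>\<^sub>v f\<^sub>\<alpha>(\<gamma>\<^sub>v)\<close>. This reduces the problem to maximising the strictly concave
  \<open>G(\<gamma>) = \<Sum>v. \<phi>\<^sub>v f\<^sub>\<alpha>(\<gamma>\<^sub>v)\<close> over \<open>conv(Z)\<close>. The gradient of \<open>G\<close> at \<open>\<gamma>\<^sup>\<star>\<close> has
  weights \<open>w\<^sub>v = \<phi>\<^sub>v (\<gamma>\<^sup>\<star>\<^sub>v)\<^sup>-\<^sup>\<alpha>\<close>, and the recursion for \<open>\<kappa>\<^sup>\<star>\<close> and \<open>\<theta>\<close> is exactly what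
  makes each weight dominate those of its children: \<open>\<Sum>c child of v. w\<^sub>c \<le> w\<^sub>v\<close>. Hence every antichain
  \<open>z \<in> Z\<close> has \<open>\<Sum>v. w\<^sub>v z\<^sub>v \<le> w\<^sub>1\<close>, while \<open>\<Sum>v. w\<^sub>v \<gamma>\<^sup>\<star>\<^sub>v = w\<^sub>1\<close>: the tangent hyperplane of
  \<open>G\<close> at \<open>\<gamma>\<^sup>\<star>\<close> supports \<open>conv(Z)\<close> there, and strict concavity gives optimality and uniqueness.
  Finally \<open>\<gamma>\<^sup>\<star> \<in> conv(Z)\<close> because it is the law of the first successes along root paths when
  independent coins with biases \<open>\<kappa>\<^sup>\<star>\<^sub>v\<close> are tossed.\<close>

section \<open>Tangent bounds for power functions\<close>

lemma powr_div_less_tangent_at_1: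
  fixes \<beta> s :: real
  assumes \<beta>: "\<beta> < 1" "\<beta> \<noteq> 0" and s: "0 < s" "s \<noteq> 1"
  shows "s powr \<beta> / \<beta> < 1 / \<beta> + (s - 1)"
proof -
  define H where "H s = 1 / \<beta> + (s - 1) - s powr \<beta> / \<beta>" for s :: real
  have H': "(H has_real_derivative 1 - x powr (\<beta> - 1)) (at x)" if "0 < x" for x
    unfolding H_def using \<beta> that
    by (auto intro!: derivative_eq_intros simp: powr_diff)
  have cont: "continuous_on {a..b} H" if "0 < a" for a b
  proof (intro continuous_at_imp_continuous_on ballI)
    fix x assume "x \<in> {a..b}"
    then show "isCont H x" using H'[of x] that DERIV_isCont by force
  qed
  have "H 1 < H s"
  proof (cases "s < 1")
    case True
    have "\<exists>y. (H has_real_derivative y) (at x) \<and> y < 0" if "s < x" "x < 1" for x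
      using H'[of x] that s powr_less_mono2_neg[of "\<beta> - 1" x 1] \<beta> by force
    then show ?thesis
      using DERIV_neg_imp_decreasing_open[OF True _ cont[OF s(1)]] by blast
  next
    case False
    then have "1 < s" using s by simp
    have "\<exists>y. (H has_real_derivative y) (at x) \<and> 0 < y" if "1 < x" "x < s" for x
      using H'[of x] that powr_less_mono2_neg[of "\<beta> - 1" 1 x] \<beta> by force
    then show ?thesis
      using DERIV_pos_imp_increasing_open[OF \<open>1 < s\<close> _ cont] by force
  qed
  then show ?thesis unfolding H_def by simp
qed

text \<open>For \<open>\<beta> < 0\<close> the hypothesis \<open>0 < y\<close> cannot be dropped: the junk value \<open>0 powr \<beta> = 0\<close>
  lies above the tangent.\<close>

lemma powr_div_less_tangent:
  fixes \<beta> x y :: real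
  assumes \<beta>: "\<beta> < 1" "\<beta> \<noteq> 0" and x: "0 < x" and y: "0 \<le> y" "\<beta> < 0 \<Longrightarrow> 0 < y"
    and "y \<noteq> x"
  shows "y powr \<beta> / \<beta> < x powr \<beta> / \<beta> + x powr (\<beta> - 1) * (y - x)"
proof (cases "y = 0")
  case True
  then have "0 < \<beta>" using y \<beta> by force
  then show ?thesis
    using True x \<beta> by (simp add: powr_diff field_simps)
next
  case False
  define s where "s = y / x"
  have s: "0 < s" "s \<noteq> 1" "y = x * s"
    using False y x \<open>y \<noteq> x\<close> unfolding s_def by auto
  have "x powr \<beta> * (s powr \<beta> / \<beta>) < x powr \<beta> * (1 / \<beta> + (s - 1))"
    using powr_div_less_tangent_at_1[OF \<beta> s(1,2)] x by (intro mult_strict_left_mono) auto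
  moreover have "y powr \<beta> = x powr \<beta> * s powr \<beta>"
    using s x by (simp add: powr_mult)
  moreover have "x powr (\<beta> - 1) * (y - x) = x powr \<beta> * (s - 1)"
    using s x by (simp add: powr_diff field_simps)
  ultimately show ?thesis by (simp add: field_simps)
qed

lemma powr_div_le_tangent:
  fixes \<beta> x y :: real
  assumes "\<beta> < 1" "\<beta> \<noteq> 0" "0 < x" "0 \<le> y" "\<beta> < 0 \<Longrightarrow> 0 < y"
  shows "y powr \<beta> / \<beta> \<le> x powr \<beta> / \<beta> + x powr (\<beta> - 1) * (y - x)"
  using powr_div_less_tangent[OF assms] by (cases "y = x") auto

lemma sum_powr_div_le_tangent:
  fixes \<beta> :: real and a x y :: "'a \<Rightarrow> real"
  assumes \<beta>: "\<beta> < 1" "\<beta> \<noteq> 0" and A: "finite A"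
    and pos: "\<And>k. k \<in> A \<Longrightarrow> 0 < a k \<and> 0 < x k \<and> 0 \<le> y k"
    and y: "\<And>k. \<beta> < 0 \<Longrightarrow> k \<in> A \<Longrightarrow> 0 < y k"
  defines "T \<equiv> \<lambda>k. a k * (x k powr \<beta> / \<beta> + x k powr (\<beta> - 1) * (y k - x k))"
  shows "(\<Sum>k\<in>A. a k * (y k powr \<beta> / \<beta>)) \<le> (\<Sum>k\<in>A. T k)"
    and "(\<Sum>k\<in>A. a k * (y k powr \<beta> / \<beta>)) = (\<Sum>k\<in>A. T k) \<Longrightarrow> k \<in> A \<Longrightarrow> y k = x k"
proof -
  have bounds: "0 < a k" "0 < x k" "0 \<le> y k" "\<beta> < 0 \<Longrightarrow> 0 < y k" if "k \<in> A" for k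
    using pos[OF that] y[OF _ that] by auto
  have le: "a k * (y k powr \<beta> / \<beta>) \<le> T k" if "k \<in> A" for k
    unfolding T_def using powr_div_le_tangent[OF \<beta> bounds(2-4)[OF that]] bounds(1)[OF that]
    by (intro mult_left_mono) auto
  then show "(\<Sum>k\<in>A. a k * (y k powr \<beta> / \<beta>)) \<le> (\<Sum>k\<in>A. T k)"
    by (rule sum_mono)
  assume eq: "(\<Sum>k\<in>A. a k * (y k powr \<beta> / \<beta>)) = (\<Sum>k\<in>A. T k)" and k: "k \<in> A"
  have eq_k: "a k * (y k powr \<beta> / \<beta>) = T k"
    using sum_mono_inv[OF eq le k A] .
  show "y k = x k"
  proof (rule ccontr)
    assume "y k \<noteq> x k"
    then have "a k * (y k powr \<beta> / \<beta>) < T k"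
      unfolding T_def using powr_div_less_tangent[OF \<beta> bounds(2-4)[OF k]] bounds(1)[OF k]
      by (intro mult_strict_left_mono) auto
    then show False using eq_k by simp
  qed
qed

definition opt_split :: "real \<Rightarrow> 'k set \<Rightarrow> ('k \<Rightarrow> real) \<Rightarrow> 'k \<Rightarrow> real" where
  "opt_split \<alpha> A r k = r k powr (1 / \<alpha> - 1) / (\<Sum>k'\<in>A. r k' powr (1 / \<alpha> - 1))"

context
  fixes \<alpha> :: real and A :: "'k set" and r :: "'k \<Rightarrow> real"
  assumes \<alpha>: "0 < \<alpha>" "\<alpha> \<noteq> 1" and A: "finite A" "A \<noteq> {}"
    and r: "\<forall>k\<in>A. 0 < r k"
begin

private abbreviation (input) "C \<equiv> \<Sum>k\<in>A. r k powr (1 / \<alpha> - 1)"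

private lemma C_pos: "0 < C"
  using A r by (intro sum_pos) (auto simp: less_imp_neq[symmetric])

lemma sum_opt_split: "(\<Sum>k\<in>A. opt_split \<alpha> A r k) = 1"
  unfolding opt_split_def using C_pos by (simp add: sum_divide_distrib[symmetric])

lemma opt_split_pos:
  assumes "k \<in> A"
  shows "0 < opt_split \<alpha> A r k"
  unfolding opt_split_def using C_pos r assms by (simp add: less_imp_neq[symmetric])

lemma opt_split_tangent_sum:
  assumes "(\<Sum>k\<in>A. \<delta> k) = 1"
  shows "(\<Sum>k\<in>A. r k powr (1 - \<alpha>) * (opt_split \<alpha> A r k powr (1 - \<alpha>) / (1 - \<alpha>)
            + opt_split \<alpha> A r k powr (1 - \<alpha> - 1) * (\<delta> k - opt_split \<alpha> A r k)))
         = C powr \<alpha> / (1 - \<alpha>)"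
proof -
  let ?d = "opt_split \<alpha> A r"
  have C: "0 < C" by (rule C_pos)
  have level: "r k powr (1 - \<alpha>) * ?d k powr (1 - \<alpha>) = r k powr (1 / \<alpha> - 1) * C powr (\<alpha> - 1)"
    and slope: "r k powr (1 - \<alpha>) * ?d k powr (1 - \<alpha> - 1) = C powr \<alpha>" if "k \<in> A" for k
  proof -
    have rk: "0 < r k" using r that by blast
    have d_powr: "r k powr (1 - \<alpha>) * ?d k powr p = r k powr ((1 - \<alpha>) + (1 / \<alpha> - 1) * p) / C powr p" for p
      unfolding opt_split_def using rk C by (simp add: powr_divide powr_powr powr_add)
    have e1: "(1 - \<alpha>) + (1 / \<alpha> - 1) * (1 - \<alpha>) = 1 / \<alpha> - 1"
      and e2: "(1 - \<alpha>) + (1 / \<alpha> - 1) * (1 - \<alpha> - 1) = 0"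
      using \<alpha> by (simp_all add: field_simps)
    have i1: "1 / C powr (1 - \<alpha>) = C powr (\<alpha> - 1)" and i2: "1 / C powr (1 - \<alpha> - 1) = C powr \<alpha>"
      by (simp_all flip: powr_minus_divide)
    show "r k powr (1 - \<alpha>) * ?d k powr (1 - \<alpha>) = r k powr (1 / \<alpha> - 1) * C powr (\<alpha> - 1)"
      unfolding d_powr e1 i1[symmetric] by simp
    show "r k powr (1 - \<alpha>) * ?d k powr (1 - \<alpha> - 1) = C powr \<alpha>"
      unfolding d_powr e2 i2[symmetric] using rk by simp
  qed
  have "(\<Sum>k\<in>A. r k powr (1 - \<alpha>) * (?d k powr (1 - \<alpha>) / (1 - \<alpha>) + ?d k powr (1 - \<alpha> - 1) * (\<delta> k - ?d k)))
      = (\<Sum>k\<in>A. r k powr (1 / \<alpha> - 1) * C powr (\<alpha> - 1) / (1 - \<alpha>) + C powr \<alpha> * (\<delta> k - ?d k))"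
    using level slope by (intro sum.cong) (simp_all add: distrib_left mult.assoc[symmetric])
  also have "\<dots> = C * C powr (\<alpha> - 1) / (1 - \<alpha>) + C powr \<alpha> * (\<Sum>k\<in>A. \<delta> k - ?d k)"
    by (simp add: sum.distrib sum_distrib_left sum_distrib_right sum_divide_distrib)
  also have "\<dots> = C powr \<alpha> / (1 - \<alpha>)"
    using assms sum_opt_split C by (simp add: sum_subtractf powr_diff)
  finally show ?thesis .
qed

lemma power_sum_le_opt_split:
  assumes \<delta>: "\<forall>k\<in>A. 0 \<le> \<delta> k" "1 < \<alpha> \<longrightarrow> (\<forall>k\<in>A. 0 < \<delta> k)"
    and sum1: "(\<Sum>k\<in>A. \<delta> k) = 1"
  shows "(\<Sum>k\<in>A. (r k * \<delta> k) powr (1 - \<alpha>) / (1 - \<alpha>)) \<le> C powr \<alpha> / (1 - \<alpha>)"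
    and "(\<Sum>k\<in>A. (r k * \<delta> k) powr (1 - \<alpha>) / (1 - \<alpha>)) = C powr \<alpha> / (1 - \<alpha>)
         \<Longrightarrow> k \<in> A \<Longrightarrow> \<delta> k = opt_split \<alpha> A r k"
proof -
  have \<beta>: "1 - \<alpha> < 1" "1 - \<alpha> \<noteq> 0" using \<alpha> by auto
  have factored: "(\<Sum>k\<in>A. (r k * \<delta> k) powr (1 - \<alpha>) / (1 - \<alpha>))
             = (\<Sum>k\<in>A. r k powr (1 - \<alpha>) * (\<delta> k powr (1 - \<alpha>) / (1 - \<alpha>)))"
    using r \<delta>(1) by (intro sum.cong) (simp_all add: powr_mult)
  note tangent = sum_powr_div_le_tangent[OF \<beta> A(1), of "\<lambda>k. r k powr (1 - \<alpha>)" "opt_split \<alpha> A r" \<delta>,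
      unfolded opt_split_tangent_sum[OF sum1]]
  have hyps: "0 < r k powr (1 - \<alpha>) \<and> 0 < opt_split \<alpha> A r k \<and> 0 \<le> \<delta> k" if "k \<in> A" for k
  proof -
    have "0 < r k" using r that by blast
    then show ?thesis using opt_split_pos[OF that] \<delta>(1) that by simp
  qed
  have pos: "\<And>k. 1 - \<alpha> < 0 \<Longrightarrow> k \<in> A \<Longrightarrow> 0 < \<delta> k"
    using \<delta>(2) by simp
  show "(\<Sum>k\<in>A. (r k * \<delta> k) powr (1 - \<alpha>) / (1 - \<alpha>)) \<le> C powr \<alpha> / (1 - \<alpha>)"
    unfolding factored by (rule tangent(1)[OF hyps pos])
  show "\<delta> k = opt_split \<alpha> A r k"
    if "(\<Sum>k\<in>A. (r k * \<delta> k) powr (1 - \<alpha>) / (1 - \<alpha>)) = C powr \<alpha> / (1 - \<alpha>)" "k \<in> A"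
    using tangent(2)[OF hyps pos, of k] that unfolding factored by blast
qed

lemma power_sum_opt_split:
  "(\<Sum>k\<in>A. (r k * opt_split \<alpha> A r k) powr (1 - \<alpha>) / (1 - \<alpha>)) = C powr \<alpha> / (1 - \<alpha>)"
proof -
  have "(\<Sum>k\<in>A. (r k * opt_split \<alpha> A r k) powr (1 - \<alpha>) / (1 - \<alpha>))
      = (\<Sum>k\<in>A. r k powr (1 - \<alpha>) * (opt_split \<alpha> A r k powr (1 - \<alpha>) / (1 - \<alpha>)
            + opt_split \<alpha> A r k powr (1 - \<alpha> - 1) * (opt_split \<alpha> A r k - opt_split \<alpha> A r k)))"
    using r opt_split_pos by (intro sum.cong) (simp_all add: powr_mult less_imp_le)
  then show ?thesis
    using opt_split_tangent_sum[OF sum_opt_split] by simp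
qed

end

section \<open>Rooted trees\<close>

definition desc :: "(nat \<times> nat) set \<Rightarrow> nat \<Rightarrow> nat set" where
  "desc E v = {u. (v, u) \<in> E\<^sup>*}"

definition path_product :: "(nat \<times> nat) set \<Rightarrow> (nat \<Rightarrow> real) \<Rightarrow> nat \<Rightarrow> real" where
  "path_product E \<kappa> v = \<kappa> v * (\<Prod>u\<in>anc E v. 1 - \<kappa> u)"

locale rtree =
  fixes n :: nat and E :: "(nat \<times> nat) set"
  assumes rooted_tree: "rooted_tree n E"
begin

lemma root_in_vertices: "1 \<in> {1..n}"
  using rooted_tree unfolding rooted_tree_def by auto

lemma edge_in_vertices: "(u, v) \<in> E \<Longrightarrow> u \<in> {1..n} \<and> v \<in> {1..n}"
  using rooted_tree unfolding rooted_tree_def by auto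

lemma no_edge_into_root: "(u, 1) \<notin> E"
  using rooted_tree unfolding rooted_tree_def by auto

lemma reachable_from_root: "v \<in> {1..n} \<Longrightarrow> (1, v) \<in> E\<^sup>*"
  using rooted_tree unfolding rooted_tree_def by auto

lemma parent_unique: "(u, v) \<in> E \<Longrightarrow> (u', v) \<in> E \<Longrightarrow> u = u'"
  using rooted_tree edge_in_vertices no_edge_into_root unfolding rooted_tree_def by metis

lemma trancl_in_vertices: "(u, v) \<in> E\<^sup>+ \<Longrightarrow> u \<in> {1..n} \<and> v \<in> {1..n}"
proof -
  have "E \<subseteq> {1..n} \<times> {1..n}" using edge_in_vertices by auto
  then show "(u, v) \<in> E\<^sup>+ \<Longrightarrow> u \<in> {1..n} \<and> v \<in> {1..n}"
    using trancl_subset_Sigma by blast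
qed

lemma not_trancl_refl: "(v, v) \<notin> E\<^sup>+"
proof
  assume cycle: "(v, v) \<in> E\<^sup>+"
  have "(1, v) \<in> E\<^sup>*"
    using reachable_from_root trancl_in_vertices[OF cycle] by blast
  from this cycle show False
  proof (induction rule: rtrancl_induct)
    case base
    then show ?case using no_edge_into_root by (metis tranclD2)
  next
    case (step y z)
    then obtain u where "(z, u) \<in> E\<^sup>*" "(u, z) \<in> E" by (metis tranclD2)
    moreover have "u = y" using parent_unique \<open>(u, z) \<in> E\<close> step.hyps(2) .
    ultimately have "(y, y) \<in> E\<^sup>+"
      using step.hyps(2) by (simp add: rtrancl_into_trancl2)
    then show ?case using step.IH by simp
  qed
qed

lemma wf_converse: "wf (E\<inverse>)"
proof (rule finite_acyclic_wf_converse)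
  show "finite E"
    using edge_in_vertices by (intro finite_subset[of E "{1..n} \<times> {1..n}"]) auto
  show "acyclic E"
    unfolding acyclic_def using not_trancl_refl by blast
qed

lemma children_induct [consumes 1, case_names step]:
  assumes "v \<in> {1..n}"
    and "\<And>v. v \<in> {1..n} \<Longrightarrow> (\<And>c. c \<in> children E v \<Longrightarrow> P c) \<Longrightarrow> P v"
  shows "P v"
proof -
  have "v \<in> {1..n} \<longrightarrow> P v"
  proof (induction v rule: wf_induct_rule[OF wf_converse])
    case (1 v)
    show ?case
    proof
      assume "v \<in> {1..n}"
      moreover have "P c" if "c \<in> children E v" for c
        using 1 that edge_in_vertices unfolding children_def by blast
      ultimately show "P v" by (rule assms(2))
    qed
  qed
  then show ?thesis using assms(1) by blast
qed

lemma children_subset: "children E v \<subseteq> {1..n}"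
  unfolding children_def using edge_in_vertices by auto

lemma finite_children: "finite (children E v)"
  using children_subset finite_subset by blast

lemma anc_subset: "anc E v \<subseteq> {1..n}"
  unfolding anc_def using trancl_in_vertices by auto

lemma finite_anc: "finite (anc E v)"
  using anc_subset finite_subset by blast

lemma not_in_anc: "v \<notin> anc E v"
  unfolding anc_def using not_trancl_refl by auto

lemma anc_root: "anc E 1 = {}"
  unfolding anc_def using no_edge_into_root by (blast dest: tranclD2)

lemma anc_child:
  assumes "c \<in> children E v"
  shows "anc E c = insert v (anc E v)"
proof -
  have edge: "(v, c) \<in> E" using assms unfolding children_def by simp
  have "u = v \<or> (u, v) \<in> E\<^sup>+" if path: "(u, c) \<in> E\<^sup>+" for u
  proof -
    obtain y where "(u, y) \<in> E\<^sup>*" "(y, c) \<in> E" using path by (metis tranclD2)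
    with edge parent_unique show ?thesis by (metis rtranclD)
  qed
  with edge show ?thesis unfolding anc_def by auto
qed

lemma children_of_anc: "u \<in> anc E v \<Longrightarrow> children E u \<noteq> {}"
  unfolding anc_def children_def by (blast dest: tranclD)

lemma desc_subset: "desc E v \<subseteq> insert v {1..n}"
  unfolding desc_def using trancl_in_vertices by (auto dest: rtranclD)

lemma finite_desc: "finite (desc E v)"
  using desc_subset finite_subset by blast

lemma desc_root: "desc E 1 = {1..n}"
  using desc_subset[of 1] root_in_vertices reachable_from_root unfolding desc_def by auto

lemma anc_of_desc: "u \<in> desc E v \<Longrightarrow> u \<noteq> v \<Longrightarrow> v \<in> anc E u"
  unfolding desc_def anc_def by (auto dest: rtranclD)

lemma desc_unfold: "desc E v = insert v (\<Union>c\<in>children E v. desc E c)"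
proof
  show "desc E v \<subseteq> insert v (\<Union>c\<in>children E v. desc E c)"
  proof
    fix u assume "u \<in> desc E v"
    then have "(v, u) \<in> E\<^sup>*" by (simp add: desc_def)
    then show "u \<in> insert v (\<Union>c\<in>children E v. desc E c)"
      by (cases rule: converse_rtranclE) (auto simp: desc_def children_def)
  qed
  show "insert v (\<Union>c\<in>children E v. desc E c) \<subseteq> desc E v"
    unfolding desc_def children_def by (auto intro: converse_rtrancl_into_rtrancl)
qed

lemma common_desc_comparable:
  "(a, u) \<in> E\<^sup>* \<Longrightarrow> (b, u) \<in> E\<^sup>* \<Longrightarrow> (a, b) \<in> E\<^sup>* \<or> (b, a) \<in> E\<^sup>*"
proof (induction arbitrary: b rule: rtrancl_induct)
  case (step y u)
  show ?case
  proof (cases "b = u")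
    case False
    then obtain y' where "(b, y') \<in> E\<^sup>*" "(y', u) \<in> E"
      using step.prems by (metis rtranclE)
    moreover have "y' = y" using parent_unique \<open>(y', u) \<in> E\<close> step.hyps(2) .
    ultimately show ?thesis using step.IH by simp
  qed (use step in auto)
qed auto

lemma desc_children_disjoint:
  assumes "c \<in> children E v" "c' \<in> children E v" "c \<noteq> c'"
  shows "desc E c \<inter> desc E c' = {}"
proof -
  have not_below: "(a, b) \<notin> E\<^sup>*" if "a \<in> children E v" "b \<in> children E v" "a \<noteq> b" for a b
  proof
    assume "(a, b) \<in> E\<^sup>*"
    with that obtain y where "(a, y) \<in> E\<^sup>*" "(y, b) \<in> E"
      by (metis rtranclE)
    moreover have "y = v"
      using parent_unique \<open>(y, b) \<in> E\<close> that(2) unfolding children_def by simp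
    ultimately have "(v, v) \<in> E\<^sup>+"
      using that(1) unfolding children_def by (simp add: rtrancl_into_trancl2)
    then show False using not_trancl_refl by simp
  qed
  show ?thesis
  proof (rule ccontr)
    assume "desc E c \<inter> desc E c' \<noteq> {}"
    then obtain u where "(c, u) \<in> E\<^sup>*" "(c', u) \<in> E\<^sup>*" unfolding desc_def by auto
    then show False
      using common_desc_comparable not_below assms by metis
  qed
qed

lemma sum_desc:
  assumes "v \<in> {1..n}"
  shows "sum f (desc E v) = f v + (\<Sum>c\<in>children E v. sum f (desc E c))"
proof -
  have "v \<notin> (\<Union>c\<in>children E v. desc E c)"
    unfolding desc_def children_def using not_trancl_refl
    by (auto intro: rtrancl_into_trancl2)
  then have "sum f (desc E v) = f v + sum f (\<Union>c\<in>children E v. desc E c)"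
    by (subst desc_unfold) (simp add: finite_children finite_desc)
  also have "\<dots> = f v + (\<Sum>c\<in>children E v. sum f (desc E c))"
    using desc_children_disjoint
    by (subst sum.UNION_disjoint) (auto simp: finite_children finite_desc)
  finally show ?thesis .
qed

end

section \<open>The convex hull of antichains\<close>

lemma finite_Zset: "finite (Zset n E)"
proof (rule finite_surj)
  show "Zset n E \<subseteq> (\<lambda>A v. if v \<in> A then 1 else 0) ` Pow {1..n}"
  proof
    fix z assume z: "z \<in> Zset n E"
    have "z = (\<lambda>v. if v \<in> {v \<in> {1..n}. z v = 1} then 1 else 0)"
      using z unfolding Zset_def by fastforce
    then show "z \<in> (\<lambda>A v. if v \<in> A then 1 else 0) ` Pow {1..n}" by blast
  qed
qed simp

lemma in_convZ_nonneg:
  assumes "in_convZ n E \<gamma>" "v \<in> {1..n}"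
  shows "0 \<le> \<gamma> v"
proof -
  obtain \<mu> where \<mu>: "\<forall>z\<in>Zset n E. 0 \<le> \<mu> z" "\<gamma> v = (\<Sum>z\<in>Zset n E. \<mu> z * z v)"
    using assms unfolding in_convZ_def by blast
  have "0 \<le> z v" if "z \<in> Zset n E" for z
  proof -
    have "z v \<in> {0, 1}" using that assms(2) unfolding Zset_def by blast
    then show ?thesis by auto
  qed
  with \<mu> show ?thesis by (simp add: sum_nonneg)
qed

context rtree
begin

lemma sum_desc_antichain_le:
  assumes flow: "\<And>v. v \<in> {1..n} \<Longrightarrow> (\<Sum>c\<in>children E v. w c) \<le> w v"
    and z: "z \<in> Zset n E" and v: "v \<in> {1..n}"
  shows "(\<Sum>u\<in>desc E v. w u * z u) \<le> w v"
  using v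
proof (induction v rule: children_induct)
  case (step v)
  have "z v \<in> {0, 1}"
    using z step.hyps unfolding Zset_def by blast
  then consider "z v = 1" | "z v = 0" by blast
  then show ?case
  proof cases
    case 1
    have "z u = 0" if "u \<in> desc E v - {v}" for u
    proof -
      have "v \<in> anc E u" "u \<in> {1..n}"
        using that anc_of_desc desc_subset[of v] by blast+
      then show ?thesis using z 1 unfolding Zset_def by force
    qed
    then have "(\<Sum>u\<in>desc E v. w u * z u) = w v * z v"
      using finite_desc by (subst sum.remove[of _ v]) (auto simp: desc_def)
    then show ?thesis using 1 by simp
  next
    case 2
    have "(\<Sum>u\<in>desc E v. w u * z u) = (\<Sum>c\<in>children E v. \<Sum>u\<in>desc E c. w u * z u)"
      using sum_desc[OF step.hyps, of "\<lambda>u. w u * z u"] 2 by simp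
    also have "\<dots> \<le> (\<Sum>c\<in>children E v. w c)"
      using step.IH by (rule sum_mono)
    also have "\<dots> \<le> w v"
      using flow step.hyps .
    finally show ?thesis .
  qed
qed

lemma in_convZ_weighted_sum_le:
  assumes flow: "\<And>v. v \<in> {1..n} \<Longrightarrow> (\<Sum>c\<in>children E v. w c) \<le> w v"
    and \<gamma>: "in_convZ n E \<gamma>"
  shows "(\<Sum>v\<in>{1..n}. w v * \<gamma> v) \<le> w 1"
proof -
  obtain \<mu> where \<mu>: "\<forall>z\<in>Zset n E. 0 \<le> \<mu> z" "(\<Sum>z\<in>Zset n E. \<mu> z) = 1"
    "\<forall>v\<in>{1..n}. \<gamma> v = (\<Sum>z\<in>Zset n E. \<mu> z * z v)"
    using \<gamma> unfolding in_convZ_def by blast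
  have "(\<Sum>v\<in>{1..n}. w v * \<gamma> v) = (\<Sum>v\<in>{1..n}. \<Sum>z\<in>Zset n E. \<mu> z * (w v * z v))"
    using \<mu>(3) by (simp add: sum_distrib_left mult.left_commute)
  also have "\<dots> = (\<Sum>z\<in>Zset n E. \<mu> z * (\<Sum>v\<in>{1..n}. w v * z v))"
    by (subst sum.swap) (simp add: sum_distrib_left)
  also have "\<dots> \<le> (\<Sum>z\<in>Zset n E. \<mu> z * w 1)"
    using sum_desc_antichain_le[OF flow _ root_in_vertices] \<mu>(1) unfolding desc_root
    by (intro sum_mono mult_left_mono) auto
  also have "\<dots> = w 1"
    using \<mu>(2) by (simp add: sum_distrib_right[symmetric])
  finally show ?thesis .
qed

text \<open>Points of the convex hull of \<open>Zset\<close> arise as laws of random antichains: an outcome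
  \<open>b\<close> of independent coins with biases \<open>\<kappa> v\<close> activates every vertex whose coin succeeds while
  the coins of all its ancestors fail.\<close>

definition first_success :: "(nat \<Rightarrow> bool) \<Rightarrow> nat \<Rightarrow> real" where
  "first_success b v = (if v \<in> {1..n} \<and> b v \<and> (\<forall>u\<in>anc E v. \<not> b u) then 1 else 0)"

definition coin_prob :: "(nat \<Rightarrow> real) \<Rightarrow> (nat \<Rightarrow> bool) \<Rightarrow> real" where
  "coin_prob \<kappa> b = (\<Prod>v\<in>{1..n}. if b v then \<kappa> v else 1 - \<kappa> v)"

lemma first_success_in_Zset: "first_success b \<in> Zset n E"
  unfolding Zset_def first_success_def by auto

lemma sum_coin_prob: "(\<Sum>b\<in>{1..n} \<rightarrow>\<^sub>E UNIV. coin_prob \<kappa> b) = 1"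
proof -
  have "(\<Sum>b\<in>{1..n} \<rightarrow>\<^sub>E UNIV. coin_prob \<kappa> b)
      = (\<Prod>v\<in>{1..n}. \<Sum>x\<in>UNIV. if x then \<kappa> v else 1 - \<kappa> v)"
    unfolding coin_prob_def by (subst prod_sum_PiE) auto
  then show ?thesis by (simp add: UNIV_bool)
qed

definition coin_factor :: "(nat \<Rightarrow> real) \<Rightarrow> nat \<Rightarrow> nat \<Rightarrow> bool \<Rightarrow> real" where
  "coin_factor \<kappa> v u x =
    (if u = v then (if x then \<kappa> u else 0)
     else if u \<in> anc E v then (if x then 0 else 1 - \<kappa> u)
     else if x then \<kappa> u else 1 - \<kappa> u)"

lemma coin_prob_first_success:
  assumes v: "v \<in> {1..n}"
  shows "coin_prob \<kappa> b * first_success b v = (\<Prod>u\<in>{1..n}. coin_factor \<kappa> v u (b u))"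
proof (cases "b v \<and> (\<forall>u\<in>anc E v. \<not> b u)")
  case True
  then have "first_success b v = 1"
    using v unfolding first_success_def by simp
  moreover have "coin_prob \<kappa> b = (\<Prod>u\<in>{1..n}. coin_factor \<kappa> v u (b u))"
    unfolding coin_prob_def coin_factor_def using True not_in_anc by (intro prod.cong) auto
  ultimately show ?thesis by simp
next
  case False
  then have "\<exists>u\<in>{1..n}. coin_factor \<kappa> v u (b u) = 0"
    using v anc_subset not_in_anc unfolding coin_factor_def by fastforce
  then have "(\<Prod>u\<in>{1..n}. coin_factor \<kappa> v u (b u)) = 0" by (intro prod_zero) auto
  moreover have "first_success b v = 0"
    using False unfolding first_success_def by auto
  ultimately show ?thesis by simp
qed

lemma sum_coin_prob_first_success:
  assumes v: "v \<in> {1..n}"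
  shows "(\<Sum>b\<in>{1..n} \<rightarrow>\<^sub>E UNIV. coin_prob \<kappa> b * first_success b v) = path_product E \<kappa> v"
proof -
  have "(\<Sum>b\<in>{1..n} \<rightarrow>\<^sub>E UNIV. coin_prob \<kappa> b * first_success b v)
      = (\<Prod>u\<in>{1..n}. coin_factor \<kappa> v u False + coin_factor \<kappa> v u True)"
    unfolding coin_prob_first_success[OF v]
    by (subst prod_sum_PiE[symmetric]) (auto simp: UNIV_bool)
  also have "\<dots> = (\<Prod>u\<in>{1..n}. if u = v then \<kappa> v else if u \<in> anc E v then 1 - \<kappa> u else 1)"
    unfolding coin_factor_def by (intro prod.cong) auto
  also have "\<dots> = \<kappa> v * (\<Prod>u\<in>{1..n} - {v}. if u \<in> anc E v then 1 - \<kappa> u else 1)"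
    using v by (subst prod.remove[of _ v]) auto
  also have "(\<Prod>u\<in>{1..n} - {v}. if u \<in> anc E v then 1 - \<kappa> u else 1)
      = (\<Prod>u\<in>({1..n} - {v}) \<inter> anc E v. 1 - \<kappa> u)"
    by (simp add: prod.inter_restrict)
  also have "({1..n} - {v}) \<inter> anc E v = anc E v"
    using anc_subset not_in_anc by blast
  finally show ?thesis unfolding path_product_def .
qed

lemma in_convZ_path_product:
  assumes \<kappa>: "\<And>v. v \<in> {1..n} \<Longrightarrow> 0 \<le> \<kappa> v \<and> \<kappa> v \<le> 1"
  shows "in_convZ n E (path_product E \<kappa>)"
proof -
  let ?B = "{1..n} \<rightarrow>\<^sub>E (UNIV :: bool set)"
  define \<mu> where "\<mu> z = (\<Sum>b\<in>{b\<in>?B. first_success b = z}. coin_prob \<kappa> b)" for z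
  have expectation: "(\<Sum>z\<in>Zset n E. \<mu> z * g z) = (\<Sum>b\<in>?B. coin_prob \<kappa> b * g (first_success b))"
    for g :: "(nat \<Rightarrow> real) \<Rightarrow> real"
  proof -
    have "(\<Sum>z\<in>Zset n E. \<mu> z * g z)
        = (\<Sum>z\<in>Zset n E. \<Sum>b\<in>{b\<in>?B. first_success b = z}. coin_prob \<kappa> b * g (first_success b))"
      unfolding \<mu>_def sum_distrib_right by (intro sum.cong) auto
    also have "\<dots> = (\<Sum>b\<in>?B. coin_prob \<kappa> b * g (first_success b))"
    proof (rule sum.group)
      show "finite ?B" by (simp add: finite_PiE)
      show "first_success ` ?B \<subseteq> Zset n E"
        using first_success_in_Zset by blast
    qed (rule finite_Zset)
    finally show ?thesis .
  qed
  show ?thesis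
    unfolding in_convZ_def
  proof (intro exI[of _ \<mu>] conjI ballI)
    show "0 \<le> \<mu> z" for z
      unfolding \<mu>_def coin_prob_def using \<kappa> by (intro sum_nonneg prod_nonneg) auto
    show "(\<Sum>z\<in>Zset n E. \<mu> z) = 1"
      using expectation[of "\<lambda>_. 1"] sum_coin_prob by simp
    show "path_product E \<kappa> v = (\<Sum>z\<in>Zset n E. \<mu> z * z v)" if "v \<in> {1..n}" for v
      using expectation[of "\<lambda>z. z v"] sum_coin_prob_first_success[OF that] by simp
  qed
qed

end

section \<open>The beam allocation problem\<close>

lemma one_plus_powr_split:
  fixes \<alpha> b :: real
  assumes b: "0 < b"
  shows "(1 / (1 + b)) powr (1 - \<alpha>) + (b / (1 + b)) powr (1 - \<alpha>) * b powr \<alpha> = (1 + b) powr \<alpha>"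
    and "b powr \<alpha> * (b / (1 + b)) powr (- \<alpha>) = (1 + b) powr \<alpha>"
proof -
  have inv: "(1 / (1 + b)) powr p = (1 + b) powr (- p)"
    and split: "(b / (1 + b)) powr p = b powr p * (1 + b) powr (- p)" for p
    using b by (simp_all add: powr_divide powr_minus_divide)
  have "(1 / (1 + b)) powr (1 - \<alpha>) + (b / (1 + b)) powr (1 - \<alpha>) * b powr \<alpha>
      = (1 + b) powr (\<alpha> - 1) * (1 + b powr (1 - \<alpha>) * b powr \<alpha>)"
    unfolding inv split by (simp add: algebra_simps)
  also have "\<dots> = (1 + b) powr \<alpha>"
    using b by (simp add: powr_add[symmetric] powr_diff)
  finally show "(1 / (1 + b)) powr (1 - \<alpha>) + (b / (1 + b)) powr (1 - \<alpha>) * b powr \<alpha> = (1 + b) powr \<alpha>" .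
  show "b powr \<alpha> * (b / (1 + b)) powr (- \<alpha>) = (1 + b) powr \<alpha>"
    unfolding split using b by (simp add: powr_minus field_simps)
qed

lemma kappa_theta_step:
  fixes \<alpha> \<phi> s \<kappa> \<theta> :: real
  assumes \<alpha>: "0 < \<alpha>" "\<alpha> \<noteq> 1" and \<phi>: "0 < \<phi>" and s: "0 \<le> (1 - \<alpha>) * s"
    and \<kappa>: "\<kappa> = 1 / (1 + ((1 - \<alpha>) / \<phi> * s) powr (1 / \<alpha>))"
    and \<theta>: "\<theta> = \<kappa> powr (1 - \<alpha>) * \<phi> / (1 - \<alpha>) + (1 - \<kappa>) powr (1 - \<alpha>) * s"
  shows "(1 - \<alpha>) * \<theta> = \<phi> * \<kappa> powr (- \<alpha>)" and "0 < \<kappa>" and "\<kappa> \<le> 1" and "s \<noteq> 0 \<Longrightarrow> \<kappa> < 1"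
    and "(1 - \<alpha>) * s * (1 - \<kappa>) powr (- \<alpha>) \<le> \<phi> * \<kappa> powr (- \<alpha>)"
proof -
  define b where "b = ((1 - \<alpha>) / \<phi> * s) powr (1 / \<alpha>)"
  have b: "0 \<le> b" and \<kappa>_b: "\<kappa> = 1 / (1 + b)"
    using \<kappa> unfolding b_def by simp_all
  then have one_minus_\<kappa>: "1 - \<kappa> = b / (1 + b)"
    by (simp add: field_simps)
  have \<kappa>_powr: "\<kappa> powr (- \<alpha>) = (1 + b) powr \<alpha>"
    using b unfolding \<kappa>_b by (simp add: powr_divide powr_minus_divide)
  have \<theta>_scaled: "(1 - \<alpha>) * \<theta> = \<phi> * \<kappa> powr (1 - \<alpha>) + (1 - \<kappa>) powr (1 - \<alpha>) * ((1 - \<alpha>) * s)"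
    unfolding \<theta> using \<alpha> by (simp add: field_simps)
  show "0 < \<kappa>" "\<kappa> \<le> 1" using b unfolding \<kappa>_b by auto
  have b_pos: "0 < b" and b_powr: "(1 - \<alpha>) * s = \<phi> * b powr \<alpha>" if "s \<noteq> 0"
  proof -
    have "(1 - \<alpha>) * s \<noteq> 0" using that \<alpha> by simp
    with s have "0 < (1 - \<alpha>) * s" by linarith
    then show "0 < b" "(1 - \<alpha>) * s = \<phi> * b powr \<alpha>"
      unfolding b_def using \<alpha> \<phi> that by (simp_all add: powr_powr field_simps)
  qed
  show "s \<noteq> 0 \<Longrightarrow> \<kappa> < 1"
    using b_pos unfolding \<kappa>_b by simp
  show "(1 - \<alpha>) * \<theta> = \<phi> * \<kappa> powr (- \<alpha>)"
  proof (cases "s = 0")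
    case True
    then show ?thesis using \<theta>_scaled unfolding \<kappa>_b b_def by simp
  next
    case False
    have "(1 - \<alpha>) * \<theta> = \<phi> * ((1 / (1 + b)) powr (1 - \<alpha>) + (b / (1 + b)) powr (1 - \<alpha>) * b powr \<alpha>)"
      unfolding \<theta>_scaled b_powr[OF False] one_minus_\<kappa> unfolding \<kappa>_b by (simp add: algebra_simps)
    also have "\<dots> = \<phi> * \<kappa> powr (- \<alpha>)"
      unfolding one_plus_powr_split(1)[OF b_pos[OF False]] \<kappa>_powr ..
    finally show ?thesis .
  qed
  show "(1 - \<alpha>) * s * (1 - \<kappa>) powr (- \<alpha>) \<le> \<phi> * \<kappa> powr (- \<alpha>)"
  proof (cases "s = 0")
    case True
    then show ?thesis using \<phi> by simp
  next
    case False
    then show ?thesis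
      using one_plus_powr_split(2)[OF b_pos[OF False], of \<alpha>]
      unfolding b_powr[OF False] \<kappa>_powr one_minus_\<kappa> by (simp add: algebra_simps)
  qed
qed

lemma sum_ereal_eq_minf:
  fixes f :: "'a \<Rightarrow> ereal"
  assumes "finite A" "a \<in> A" "f a = -\<infinity>" "\<And>x. x \<in> A \<Longrightarrow> f x \<noteq> \<infinity>"
  shows "sum f A = -\<infinity>"
proof -
  have "sum f (A - {a}) \<noteq> \<infinity>" using assms by (simp add: sum_Pinfty)
  then show ?thesis using assms by (simp add: sum.remove)
qed

locale beam_problem = rtree n E for n E +
  fixes \<alpha> :: real and K :: "'k set" and r :: "'k \<Rightarrow> real" and vb :: "'k \<Rightarrow> nat"
    and \<theta> \<kappa> :: "nat \<Rightarrow> real"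
  assumes alpha: "\<alpha> > 0" "\<alpha> \<noteq> 1"
    and finite_K: "finite K"
    and r_pos: "\<forall>k\<in>K. r k > 0"
    and vb_in_vertices: "\<forall>k\<in>K. vb k \<in> {1..n}"
    and flows_nonempty: "\<forall>v\<in>{1..n}. flows K vb v \<noteq> {}"
    and kappa_eq: "\<forall>v\<in>{1..n}. \<kappa> v = 1 / (1 + ((1 - \<alpha>) / phi \<alpha> K vb r v
                       * (\<Sum>v'\<in>children E v. \<theta> v')) powr (1 / \<alpha>))"
    and theta_eq: "\<forall>v\<in>{1..n}. \<theta> v = \<kappa> v powr (1 - \<alpha>) * phi \<alpha> K vb r v / (1 - \<alpha>)
                       + (1 - \<kappa> v) powr (1 - \<alpha>) * (\<Sum>v'\<in>children E v. \<theta> v')"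
begin

abbreviation \<phi> :: "nat \<Rightarrow> real" where "\<phi> \<equiv> phi \<alpha> K vb r"

abbreviation \<gamma>opt :: "nat \<Rightarrow> real" where "\<gamma>opt \<equiv> path_product E \<kappa>"

abbreviation \<delta>opt :: "'k \<Rightarrow> real" where "\<delta>opt k \<equiv> opt_split \<alpha> (flows K vb (vb k)) r k"

abbreviation anc_prod :: "nat \<Rightarrow> real" where "anc_prod v \<equiv> \<Prod>u\<in>anc E v. 1 - \<kappa> u"

lemma finite_flows: "finite (flows K vb v)"
  using finite_K unfolding flows_def by simp

lemma mem_flows: "k \<in> flows K vb v \<longleftrightarrow> k \<in> K \<and> vb k = v"
  unfolding flows_def by simp

lemma flows_ne: "v \<in> {1..n} \<Longrightarrow> flows K vb v \<noteq> {}"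
  using flows_nonempty by blast

lemma r_pos_flows: "\<forall>k\<in>flows K vb v. 0 < r k"
  using r_pos by (simp add: mem_flows)

lemma phi_pos: "v \<in> {1..n} \<Longrightarrow> 0 < \<phi> v"
  unfolding phi_def using flows_nonempty finite_flows r_pos
  by (intro powr_gt_zero[THEN iffD2] less_imp_neq[symmetric] sum_pos) (auto simp: mem_flows)

lemma kappa_theta:
  assumes "v \<in> {1..n}"
  shows "(1 - \<alpha>) * \<theta> v = \<phi> v * \<kappa> v powr (- \<alpha>) \<and> 0 < \<kappa> v \<and> \<kappa> v \<le> 1
    \<and> (children E v \<noteq> {} \<longrightarrow> \<kappa> v < 1)
    \<and> (1 - \<alpha>) * (\<Sum>c\<in>children E v. \<theta> c) * (1 - \<kappa> v) powr (- \<alpha>) \<le> \<phi> v * \<kappa> v powr (- \<alpha>)"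
  using assms
proof (induction v rule: children_induct)
  case (step v)
  have child_pos: "0 < (1 - \<alpha>) * \<theta> c" if "c \<in> children E v" for c
  proof -
    have "c \<in> {1..n}" using that children_subset by blast
    then show ?thesis using step.IH[OF that] phi_pos by simp
  qed
  have sum_scaled: "(1 - \<alpha>) * (\<Sum>c\<in>children E v. \<theta> c) = (\<Sum>c\<in>children E v. (1 - \<alpha>) * \<theta> c)"
    by (simp add: sum_distrib_left)
  have "0 \<le> (1 - \<alpha>) * (\<Sum>c\<in>children E v. \<theta> c)"
    unfolding sum_scaled using child_pos by (intro sum_nonneg less_imp_le)
  note step_facts = kappa_theta_step[OF alpha phi_pos[OF step.hyps] this]
  have "(\<Sum>c\<in>children E v. \<theta> c) \<noteq> 0" if "children E v \<noteq> {}"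
  proof -
    have "0 < (\<Sum>c\<in>children E v. (1 - \<alpha>) * \<theta> c)"
      using finite_children that child_pos by (rule sum_pos)
    then show ?thesis unfolding sum_scaled[symmetric] by auto
  qed
  then show ?case
    using step_facts kappa_eq theta_eq step.hyps by auto
qed

lemma theta_scaled: "v \<in> {1..n} \<Longrightarrow> (1 - \<alpha>) * \<theta> v = \<phi> v * \<kappa> v powr (- \<alpha>)"
  using kappa_theta by blast

lemma kappa_pos: "v \<in> {1..n} \<Longrightarrow> 0 < \<kappa> v"
  using kappa_theta by blast

lemma kappa_le_1: "v \<in> {1..n} \<Longrightarrow> \<kappa> v \<le> 1"
  using kappa_theta by blast

lemma kappa_anc_less_1: "u \<in> anc E v \<Longrightarrow> \<kappa> u < 1"
  using kappa_theta children_of_anc anc_subset by blast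

lemma children_theta_le:
  "v \<in> {1..n} \<Longrightarrow> (1 - \<alpha>) * (\<Sum>c\<in>children E v. \<theta> c) * (1 - \<kappa> v) powr (- \<alpha>) \<le> \<phi> v * \<kappa> v powr (- \<alpha>)"
  using kappa_theta by blast

lemma anc_prod_pos: "0 < anc_prod v"
  using kappa_anc_less_1 by (intro prod_pos) simp

lemma anc_prod_child: "c \<in> children E v \<Longrightarrow> anc_prod c = (1 - \<kappa> v) * anc_prod v"
  using anc_child not_in_anc finite_anc by simp

lemma gamma_opt_pos: "v \<in> {1..n} \<Longrightarrow> 0 < \<gamma>opt v"
  unfolding path_product_def using kappa_pos anc_prod_pos by simp

lemma in_convZ_gamma_opt: "in_convZ n E \<gamma>opt"
  using kappa_pos kappa_le_1 by (intro in_convZ_path_product) (simp add: less_imp_le)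

definition dual_weight :: "nat \<Rightarrow> real" where
  "dual_weight v = \<phi> v * \<gamma>opt v powr (- \<alpha>)"

lemma dual_weight_eq: "v \<in> {1..n} \<Longrightarrow> dual_weight v = (1 - \<alpha>) * \<theta> v * anc_prod v powr (- \<alpha>)"
  unfolding dual_weight_def path_product_def theta_scaled
  using kappa_pos anc_prod_pos by (simp add: powr_mult)

lemma dual_weight_flow: "v \<in> {1..n} \<Longrightarrow> (\<Sum>c\<in>children E v. dual_weight c) \<le> dual_weight v"
proof -
  assume v: "v \<in> {1..n}"
  have "(\<Sum>c\<in>children E v. dual_weight c)
      = (\<Sum>c\<in>children E v. (1 - \<alpha>) * \<theta> c * ((1 - \<kappa> v) powr (- \<alpha>) * anc_prod v powr (- \<alpha>)))"
  proof (rule sum.cong[OF refl])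
    fix c assume c: "c \<in> children E v"
    have "c \<in> {1..n}" using c children_subset by blast
    moreover have "\<kappa> v < 1" using kappa_theta[OF v] c by blast
    ultimately show "dual_weight c = (1 - \<alpha>) * \<theta> c * ((1 - \<kappa> v) powr (- \<alpha>) * anc_prod v powr (- \<alpha>))"
      unfolding dual_weight_eq[OF \<open>c \<in> {1..n}\<close>] anc_prod_child[OF c] using anc_prod_pos
      by (simp add: powr_mult)
  qed
  also have "\<dots> = (1 - \<alpha>) * (\<Sum>c\<in>children E v. \<theta> c) * (1 - \<kappa> v) powr (- \<alpha>) * anc_prod v powr (- \<alpha>)"
    by (simp add: sum_distrib_left sum_distrib_right mult.assoc)
  also have "\<dots> \<le> \<phi> v * \<kappa> v powr (- \<alpha>) * anc_prod v powr (- \<alpha>)"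
    using children_theta_le[OF v] by (intro mult_right_mono) auto
  also have "\<dots> = dual_weight v"
    unfolding dual_weight_def path_product_def using kappa_pos[OF v] anc_prod_pos by (simp add: powr_mult)
  finally show ?thesis .
qed

lemma sum_desc_value:
  assumes "v \<in> {1..n}"
  shows "(\<Sum>u\<in>desc E v. \<phi> u * \<gamma>opt u powr (1 - \<alpha>)) = (1 - \<alpha>) * \<theta> v * anc_prod v powr (1 - \<alpha>)"
  using assms
proof (induction v rule: children_induct)
  case (step v)
  have \<kappa>: "0 < \<kappa> v" "\<kappa> v \<le> 1" using kappa_pos kappa_le_1 step.hyps by auto
  have "(\<Sum>c\<in>children E v. \<Sum>u\<in>desc E c. \<phi> u * \<gamma>opt u powr (1 - \<alpha>))
      = (\<Sum>c\<in>children E v. (1 - \<alpha>) * \<theta> c * ((1 - \<kappa> v) powr (1 - \<alpha>) * anc_prod v powr (1 - \<alpha>)))"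
  proof (rule sum.cong[OF refl])
    fix c assume c: "c \<in> children E v"
    then have "c \<in> {1..n}" using children_subset by blast
    then show "(\<Sum>u\<in>desc E c. \<phi> u * \<gamma>opt u powr (1 - \<alpha>))
        = (1 - \<alpha>) * \<theta> c * ((1 - \<kappa> v) powr (1 - \<alpha>) * anc_prod v powr (1 - \<alpha>))"
      unfolding step.IH[OF c] anc_prod_child[OF c] using \<kappa> anc_prod_pos by (simp add: powr_mult)
  qed
  also have "\<dots> = (1 - \<alpha>) * (\<Sum>c\<in>children E v. \<theta> c) * (1 - \<kappa> v) powr (1 - \<alpha>) * anc_prod v powr (1 - \<alpha>)"
    by (simp add: sum_distrib_left sum_distrib_right mult.assoc)
  finally have children: "(\<Sum>c\<in>children E v. \<Sum>u\<in>desc E c. \<phi> u * \<gamma>opt u powr (1 - \<alpha>))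
      = (1 - \<alpha>) * (\<Sum>c\<in>children E v. \<theta> c) * (1 - \<kappa> v) powr (1 - \<alpha>) * anc_prod v powr (1 - \<alpha>)" .
  have \<theta>: "(1 - \<alpha>) * \<theta> v
      = \<phi> v * \<kappa> v powr (1 - \<alpha>) + (1 - \<alpha>) * (\<Sum>c\<in>children E v. \<theta> c) * (1 - \<kappa> v) powr (1 - \<alpha>)"
    using theta_eq step.hyps alpha by (simp add: field_simps)
  have "(\<Sum>u\<in>desc E v. \<phi> u * \<gamma>opt u powr (1 - \<alpha>))
      = \<phi> v * (\<kappa> v * anc_prod v) powr (1 - \<alpha>)
        + (1 - \<alpha>) * (\<Sum>c\<in>children E v. \<theta> c) * (1 - \<kappa> v) powr (1 - \<alpha>) * anc_prod v powr (1 - \<alpha>)"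
    unfolding sum_desc[OF step.hyps] children unfolding path_product_def ..
  also have "\<dots> = (1 - \<alpha>) * \<theta> v * anc_prod v powr (1 - \<alpha>)"
    unfolding \<theta> using \<kappa> anc_prod_pos by (simp add: powr_mult algebra_simps)
  finally show ?case .
qed

lemma sum_dual_weight_gamma_opt: "(\<Sum>v\<in>{1..n}. dual_weight v * \<gamma>opt v) = dual_weight 1"
proof -
  have "(\<Sum>v\<in>{1..n}. dual_weight v * \<gamma>opt v) = (\<Sum>v\<in>{1..n}. \<phi> v * \<gamma>opt v powr (1 - \<alpha>))"
  proof (rule sum.cong[OF refl])
    fix v assume "v \<in> {1..n}"
    then have "0 \<le> \<gamma>opt v" using gamma_opt_pos by (simp add: less_imp_le)
    then have "\<gamma>opt v * \<gamma>opt v powr (- \<alpha>) = \<gamma>opt v powr (1 - \<alpha>)"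
      by (simp add: powr_mult_base)
    then show "dual_weight v * \<gamma>opt v = \<phi> v * \<gamma>opt v powr (1 - \<alpha>)"
      unfolding dual_weight_def by (simp add: ac_simps)
  qed
  also have "\<dots> = (1 - \<alpha>) * \<theta> 1"
    using sum_desc_value[OF root_in_vertices] unfolding desc_root anc_root by simp
  also have "\<dots> = dual_weight 1"
    using dual_weight_eq[OF root_in_vertices] unfolding anc_root by simp
  finally show ?thesis .
qed

definition reduced_objective :: "(nat \<Rightarrow> real) \<Rightarrow> real" where
  "reduced_objective \<gamma> = (\<Sum>v\<in>{1..n}. \<phi> v * (\<gamma> v powr (1 - \<alpha>) / (1 - \<alpha>)))"

lemma reduced_objective_le:
  assumes \<gamma>: "in_convZ n E \<gamma>" and pos: "\<And>v. 1 < \<alpha> \<Longrightarrow> v \<in> {1..n} \<Longrightarrow> 0 < \<gamma> v"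
  shows "reduced_objective \<gamma> \<le> reduced_objective \<gamma>opt"
    and "reduced_objective \<gamma> = reduced_objective \<gamma>opt \<Longrightarrow> v \<in> {1..n} \<Longrightarrow> \<gamma> v = \<gamma>opt v"
proof -
  have \<beta>: "1 - \<alpha> < 1" "1 - \<alpha> \<noteq> 0" using alpha by auto
  have hyps: "0 < \<phi> v \<and> 0 < \<gamma>opt v \<and> 0 \<le> \<gamma> v" if "v \<in> {1..n}" for v
    using phi_pos gamma_opt_pos in_convZ_nonneg[OF \<gamma>] that by auto
  have pos': "\<And>v. 1 - \<alpha> < 0 \<Longrightarrow> v \<in> {1..n} \<Longrightarrow> 0 < \<gamma> v" using pos by simp
  note tangent = sum_powr_div_le_tangent[where A="{1..n}" and a=\<phi> and x=\<gamma>opt and y=\<gamma>,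
      OF \<beta> finite_atLeastAtMost]
  have tangent_ge: "reduced_objective \<gamma> \<le> (\<Sum>v\<in>{1..n}. \<phi> v * (\<gamma>opt v powr (1 - \<alpha>) / (1 - \<alpha>)
          + \<gamma>opt v powr (1 - \<alpha> - 1) * (\<gamma> v - \<gamma>opt v)))"
    unfolding reduced_objective_def using hyps pos' by (rule tangent(1))
  have "(\<Sum>v\<in>{1..n}. \<phi> v * (\<gamma>opt v powr (1 - \<alpha>) / (1 - \<alpha>)
          + \<gamma>opt v powr (1 - \<alpha> - 1) * (\<gamma> v - \<gamma>opt v)))
      = reduced_objective \<gamma>opt + ((\<Sum>v\<in>{1..n}. dual_weight v * \<gamma> v) - (\<Sum>v\<in>{1..n}. dual_weight v * \<gamma>opt v))"
    unfolding reduced_objective_def dual_weight_def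
    by (simp add: sum.distrib sum_subtractf algebra_simps)
  also have "\<dots> \<le> reduced_objective \<gamma>opt"
    using in_convZ_weighted_sum_le[OF dual_weight_flow \<gamma>] sum_dual_weight_gamma_opt by simp
  finally have tangent_le: "(\<Sum>v\<in>{1..n}. \<phi> v * (\<gamma>opt v powr (1 - \<alpha>) / (1 - \<alpha>)
          + \<gamma>opt v powr (1 - \<alpha> - 1) * (\<gamma> v - \<gamma>opt v))) \<le> reduced_objective \<gamma>opt" .
  with tangent_ge show "reduced_objective \<gamma> \<le> reduced_objective \<gamma>opt" by linarith
  assume "reduced_objective \<gamma> = reduced_objective \<gamma>opt" and v: "v \<in> {1..n}"
  with tangent_ge tangent_le have "(\<Sum>v\<in>{1..n}. \<phi> v * (\<gamma> v powr (1 - \<alpha>) / (1 - \<alpha>)))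
      = (\<Sum>v\<in>{1..n}. \<phi> v * (\<gamma>opt v powr (1 - \<alpha>) / (1 - \<alpha>)
          + \<gamma>opt v powr (1 - \<alpha> - 1) * (\<gamma> v - \<gamma>opt v)))"
    unfolding reduced_objective_def by linarith
  from hyps pos' this v show "\<gamma> v = \<gamma>opt v" by (rule tangent(2))
qed


lemma delta_opt_flows: "k \<in> flows K vb v \<Longrightarrow> \<delta>opt k = opt_split \<alpha> (flows K vb v) r k"
  by (simp add: mem_flows)

lemma delta_opt_pos: "k \<in> K \<Longrightarrow> 0 < \<delta>opt k"
  using opt_split_pos[OF alpha finite_flows flows_ne r_pos_flows] vb_in_vertices
  by (simp add: mem_flows)

lemma delta_opt_nonneg: "\<forall>k\<in>flows K vb v. 0 \<le> \<delta>opt k"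
proof
  fix k assume "k \<in> flows K vb v"
  then have "k \<in> K" by (simp add: mem_flows)
  then show "0 \<le> \<delta>opt k" using delta_opt_pos less_imp_le by blast
qed

lemma sum_delta_opt:
  assumes "v \<in> {1..n}"
  shows "(\<Sum>k\<in>flows K vb v. \<delta>opt k) = 1"
proof -
  have "(\<Sum>k\<in>flows K vb v. \<delta>opt k) = (\<Sum>k\<in>flows K vb v. opt_split \<alpha> (flows K vb v) r k)"
    using delta_opt_flows by (rule sum.cong[OF refl])
  also have "\<dots> = 1"
    by (rule sum_opt_split[OF alpha finite_flows flows_ne[OF assms] r_pos_flows])
  finally show ?thesis .
qed

lemma in_Delta_delta_opt: "in_Delta n K vb \<delta>opt"
  unfolding in_Delta_def
proof (intro conjI ballI)
  fix k assume k: "k \<in> K"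
  then have "k \<in> flows K vb (vb k)" "vb k \<in> {1..n}"
    using vb_in_vertices by (auto simp: mem_flows)
  then have "\<delta>opt k \<le> (\<Sum>k'\<in>flows K vb (vb k). \<delta>opt k')"
    using delta_opt_nonneg finite_flows by (intro member_le_sum) auto
  then show "\<delta>opt k \<le> 1" using sum_delta_opt \<open>vb k \<in> {1..n}\<close> by simp
  show "0 \<le> \<delta>opt k" using delta_opt_pos[OF k] by simp
qed (rule sum_delta_opt)

lemma sum_flows_powr_scale:
  assumes "0 \<le> t" "\<forall>k\<in>flows K vb v. 0 \<le> \<delta> k"
  shows "(\<Sum>k\<in>flows K vb v. (r k * t * \<delta> k) powr (1 - \<alpha>) / (1 - \<alpha>))
       = t powr (1 - \<alpha>) * (\<Sum>k\<in>flows K vb v. (r k * \<delta> k) powr (1 - \<alpha>) / (1 - \<alpha>))"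
  unfolding sum_distrib_left
proof (rule sum.cong[OF refl])
  fix k assume k: "k \<in> flows K vb v"
  have "r k * t * \<delta> k = t * (r k * \<delta> k)" by simp
  then show "(r k * t * \<delta> k) powr (1 - \<alpha>) / (1 - \<alpha>) = t powr (1 - \<alpha>) * ((r k * \<delta> k) powr (1 - \<alpha>) / (1 - \<alpha>))"
    using assms r_pos_flows k by (simp add: powr_mult)
qed

lemma beam_flows_le:
  assumes v: "v \<in> {1..n}" and t: "0 \<le> t"
    and \<delta>: "\<forall>k\<in>flows K vb v. 0 \<le> \<delta> k" "1 < \<alpha> \<longrightarrow> (\<forall>k\<in>flows K vb v. 0 < \<delta> k)"
    and sum1: "(\<Sum>k\<in>flows K vb v. \<delta> k) = 1"
  shows "(\<Sum>k\<in>flows K vb v. (r k * t * \<delta> k) powr (1 - \<alpha>) / (1 - \<alpha>)) \<le> \<phi> v * (t powr (1 - \<alpha>) / (1 - \<alpha>))"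
    and "(\<Sum>k\<in>flows K vb v. (r k * t * \<delta> k) powr (1 - \<alpha>) / (1 - \<alpha>)) = \<phi> v * (t powr (1 - \<alpha>) / (1 - \<alpha>))
         \<Longrightarrow> 0 < t \<Longrightarrow> k \<in> flows K vb v \<Longrightarrow> \<delta> k = \<delta>opt k"
proof -
  note bound = power_sum_le_opt_split[OF alpha finite_flows flows_ne[OF v] r_pos_flows \<delta> sum1]
  have rhs: "\<phi> v * (t powr (1 - \<alpha>) / (1 - \<alpha>)) = t powr (1 - \<alpha>) * (\<phi> v / (1 - \<alpha>))" by simp
  show "(\<Sum>k\<in>flows K vb v. (r k * t * \<delta> k) powr (1 - \<alpha>) / (1 - \<alpha>)) \<le> \<phi> v * (t powr (1 - \<alpha>) / (1 - \<alpha>))"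
    unfolding sum_flows_powr_scale[OF t \<delta>(1)] rhs using bound(1)
    by (intro mult_left_mono) (simp_all add: phi_def)
  assume eq: "(\<Sum>k\<in>flows K vb v. (r k * t * \<delta> k) powr (1 - \<alpha>) / (1 - \<alpha>)) = \<phi> v * (t powr (1 - \<alpha>) / (1 - \<alpha>))"
    and "0 < t" and k: "k \<in> flows K vb v"
  have "t powr (1 - \<alpha>) * (\<Sum>k\<in>flows K vb v. (r k * \<delta> k) powr (1 - \<alpha>) / (1 - \<alpha>))
      = t powr (1 - \<alpha>) * (\<phi> v / (1 - \<alpha>))"
    using eq unfolding sum_flows_powr_scale[OF t \<delta>(1)] rhs .
  then have "(\<Sum>k\<in>flows K vb v. (r k * \<delta> k) powr (1 - \<alpha>) / (1 - \<alpha>)) = \<phi> v / (1 - \<alpha>)"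
    using \<open>0 < t\<close> by (subst (asm) mult_cancel_left) simp
  then show "\<delta> k = \<delta>opt k"
    using bound(2) k delta_opt_flows unfolding phi_def by auto
qed

lemma beam_flows_opt:
  assumes v: "v \<in> {1..n}" and t: "0 \<le> t"
  shows "(\<Sum>k\<in>flows K vb v. (r k * t * \<delta>opt k) powr (1 - \<alpha>) / (1 - \<alpha>)) = \<phi> v * (t powr (1 - \<alpha>) / (1 - \<alpha>))"
proof -
  have "(\<Sum>k\<in>flows K vb v. (r k * \<delta>opt k) powr (1 - \<alpha>) / (1 - \<alpha>))
      = (\<Sum>k\<in>flows K vb v. (r k * opt_split \<alpha> (flows K vb v) r k) powr (1 - \<alpha>) / (1 - \<alpha>))"
    using delta_opt_flows by simp
  also have "\<dots> = \<phi> v / (1 - \<alpha>)"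
    unfolding power_sum_opt_split[OF alpha finite_flows flows_ne[OF v] r_pos_flows] phi_def ..
  finally show ?thesis
    using sum_flows_powr_scale[OF t delta_opt_nonneg] by simp
qed

definition real_objective :: "('k \<Rightarrow> real) \<Rightarrow> (nat \<Rightarrow> real) \<Rightarrow> real" where
  "real_objective \<delta> \<gamma> = (\<Sum>v\<in>{1..n}. \<Sum>k\<in>flows K vb v. (r k * \<gamma> v * \<delta> k) powr (1 - \<alpha>) / (1 - \<alpha>))"

lemma real_objective_opt: "real_objective \<delta>opt \<gamma>opt = reduced_objective \<gamma>opt"
  unfolding real_objective_def reduced_objective_def
  using beam_flows_opt gamma_opt_pos by (intro sum.cong) (auto simp: less_imp_le)

lemma real_objective_le_reduced:
  assumes \<delta>: "in_Delta n K vb \<delta>" and \<gamma>: "in_convZ n E \<gamma>"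
    and \<delta>_pos: "1 < \<alpha> \<Longrightarrow> \<forall>k\<in>K. 0 < \<delta> k"
  shows "real_objective \<delta> \<gamma> \<le> reduced_objective \<gamma>"
    and "real_objective \<delta> \<gamma> = reduced_objective \<gamma> \<Longrightarrow> \<forall>v\<in>{1..n}. 0 < \<gamma> v
         \<Longrightarrow> \<forall>k\<in>K. \<delta> k = \<delta>opt k"
proof -
  let ?R = "\<lambda>v. \<Sum>k\<in>flows K vb v. (r k * \<gamma> v * \<delta> k) powr (1 - \<alpha>) / (1 - \<alpha>)"
  let ?G = "\<lambda>v. \<phi> v * (\<gamma> v powr (1 - \<alpha>) / (1 - \<alpha>))"
  have \<delta>_flows: "\<forall>k\<in>flows K vb v. 0 \<le> \<delta> k" "1 < \<alpha> \<longrightarrow> (\<forall>k\<in>flows K vb v. 0 < \<delta> k)" for v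
    using \<delta> \<delta>_pos unfolding in_Delta_def by (simp_all add: mem_flows)
  have sum1: "(\<Sum>k\<in>flows K vb v. \<delta> k) = 1" if "v \<in> {1..n}" for v
    using \<delta> that unfolding in_Delta_def by blast
  note beam = beam_flows_le[OF _ in_convZ_nonneg[OF \<gamma>] \<delta>_flows sum1]
  have beam_le: "?R v \<le> ?G v" if "v \<in> {1..n}" for v
    using beam(1)[OF that that that] .
  then show "real_objective \<delta> \<gamma> \<le> reduced_objective \<gamma>"
    unfolding real_objective_def reduced_objective_def by (rule sum_mono)
  assume eq: "real_objective \<delta> \<gamma> = reduced_objective \<gamma>" and \<gamma>_pos: "\<forall>v\<in>{1..n}. 0 < \<gamma> v"
  from eq have "sum ?R {1..n} = sum ?G {1..n}"
    unfolding real_objective_def reduced_objective_def .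
  then have beam_eq: "?R v = ?G v" if "v \<in> {1..n}" for v
    using beam_le that by (rule sum_mono_inv) simp_all
  show "\<forall>k\<in>K. \<delta> k = \<delta>opt k"
  proof
    fix k assume "k \<in> K"
    then have v: "vb k \<in> {1..n}" and "k \<in> flows K vb (vb k)"
      using vb_in_vertices by (simp_all add: mem_flows)
    then show "\<delta> k = \<delta>opt k"
      using beam(2)[OF v v v beam_eq[OF v]] \<gamma>_pos by blast
  qed
qed

lemma real_objective_le:
  assumes \<delta>: "in_Delta n K vb \<delta>" and \<gamma>: "in_convZ n E \<gamma>"
    and pos: "1 < \<alpha> \<Longrightarrow> (\<forall>v\<in>{1..n}. 0 < \<gamma> v) \<and> (\<forall>k\<in>K. 0 < \<delta> k)"
  shows "real_objective \<delta> \<gamma> \<le> reduced_objective \<gamma>opt"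
    and "real_objective \<delta> \<gamma> = reduced_objective \<gamma>opt
         \<Longrightarrow> (\<forall>k\<in>K. \<delta> k = \<delta>opt k) \<and> (\<forall>v\<in>{1..n}. \<gamma> v = \<gamma>opt v)"
proof -
  have \<gamma>_pos: "\<And>v. 1 < \<alpha> \<Longrightarrow> v \<in> {1..n} \<Longrightarrow> 0 < \<gamma> v" and \<delta>_pos: "1 < \<alpha> \<Longrightarrow> \<forall>k\<in>K. 0 < \<delta> k"
    using pos by blast+
  note inner = real_objective_le_reduced[OF \<delta> \<gamma> \<delta>_pos]
    and outer = reduced_objective_le[OF \<gamma> \<gamma>_pos]
  show "real_objective \<delta> \<gamma> \<le> reduced_objective \<gamma>opt"
    using inner(1) outer(1) by linarith
  assume "real_objective \<delta> \<gamma> = reduced_objective \<gamma>opt"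
  then have "reduced_objective \<gamma> = reduced_objective \<gamma>opt"
    and "real_objective \<delta> \<gamma> = reduced_objective \<gamma>"
    using inner(1) outer(1) by linarith+
  moreover from this(1) have "\<forall>v\<in>{1..n}. \<gamma> v = \<gamma>opt v"
    using outer(2) by blast
  moreover from this have "\<forall>v\<in>{1..n}. 0 < \<gamma> v"
    using gamma_opt_pos by simp
  ultimately show "(\<forall>k\<in>K. \<delta> k = \<delta>opt k) \<and> (\<forall>v\<in>{1..n}. \<gamma> v = \<gamma>opt v)"
    using inner(2) by blast
qed

lemma objective_eq_real:
  assumes "\<alpha> < 1 \<or> (\<forall>v\<in>{1..n}. \<forall>k\<in>flows K vb v. r k * \<gamma> v * \<delta> k \<noteq> 0)"
  shows "objective \<alpha> n K vb r \<delta> \<gamma> = ereal (real_objective \<delta> \<gamma>)"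
proof -
  have "objective \<alpha> n K vb r \<delta> \<gamma>
      = (\<Sum>v\<in>{1..n}. \<Sum>k\<in>flows K vb v. ereal ((r k * \<gamma> v * \<delta> k) powr (1 - \<alpha>) / (1 - \<alpha>)))"
    unfolding objective_def f_alpha_def using assms by (intro sum.cong refl) auto
  then show ?thesis unfolding real_objective_def by simp
qed

lemma objective_eq_minf:
  assumes "1 < \<alpha>" "v \<in> {1..n}" "k \<in> flows K vb v" "r k * \<gamma> v * \<delta> k = 0"
  shows "objective \<alpha> n K vb r \<delta> \<gamma> = -\<infinity>"
  unfolding objective_def
proof (rule sum_ereal_eq_minf)
  show "(\<Sum>k\<in>flows K vb v. f_alpha \<alpha> (r k * \<gamma> v * \<delta> k)) = -\<infinity>"
    using assms finite_flows by (intro sum_ereal_eq_minf) (auto simp: f_alpha_def)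
  show "(\<Sum>k\<in>flows K vb u. f_alpha \<alpha> (r k * \<gamma> u * \<delta> k)) \<noteq> \<infinity>" for u
    using finite_flows by (simp add: sum_Pinfty f_alpha_def)
qed (use assms in auto)

lemma objective_opt: "objective \<alpha> n K vb r \<delta>opt \<gamma>opt = ereal (reduced_objective \<gamma>opt)"
proof -
  have "r k * \<gamma>opt v * \<delta>opt k \<noteq> 0" if "v \<in> {1..n}" "k \<in> flows K vb v" for v k
  proof -
    have "k \<in> K" using that(2) by (simp add: mem_flows)
    then have "0 < r k" "0 < \<delta>opt k" using r_pos delta_opt_pos by auto
    with gamma_opt_pos[OF that(1)] show ?thesis by simp
  qed
  then show ?thesis
    unfolding real_objective_opt[symmetric] by (intro objective_eq_real disjI2) blast
qed

lemma objective_le_opt: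
  assumes \<delta>: "in_Delta n K vb \<delta>" and \<gamma>: "in_convZ n E \<gamma>"
  shows "objective \<alpha> n K vb r \<delta> \<gamma> \<le> objective \<alpha> n K vb r \<delta>opt \<gamma>opt
    \<and> (objective \<alpha> n K vb r \<delta> \<gamma> = objective \<alpha> n K vb r \<delta>opt \<gamma>opt
       \<longrightarrow> (\<forall>k\<in>K. \<delta> k = \<delta>opt k) \<and> (\<forall>v\<in>{1..n}. \<gamma> v = \<gamma>opt v))"
proof (cases "\<alpha> < 1 \<or> (\<forall>v\<in>{1..n}. \<forall>k\<in>flows K vb v. r k * \<gamma> v * \<delta> k \<noteq> 0)")
  case True
  have nonzero: "r k * \<gamma> v * \<delta> k \<noteq> 0" if "1 < \<alpha>" "v \<in> {1..n}" "k \<in> flows K vb v" for v k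
  proof -
    have "\<not> \<alpha> < 1" using that(1) by simp
    with True show ?thesis using that(2,3) by blast
  qed
  have "(\<forall>v\<in>{1..n}. 0 < \<gamma> v) \<and> (\<forall>k\<in>K. 0 < \<delta> k)" if "1 < \<alpha>"
  proof (intro conjI ballI)
    fix v assume v: "v \<in> {1..n}"
    then obtain k where "k \<in> flows K vb v" using flows_ne by blast
    then have "\<gamma> v \<noteq> 0" using nonzero[OF that v] by simp
    then show "0 < \<gamma> v" using in_convZ_nonneg[OF \<gamma> v] by simp
  next
    fix k assume k: "k \<in> K"
    then have "vb k \<in> {1..n}" "k \<in> flows K vb (vb k)"
      using vb_in_vertices by (simp_all add: mem_flows)
    then have "\<delta> k \<noteq> 0" using nonzero[OF that] by simp
    moreover have "0 \<le> \<delta> k" using \<delta> k unfolding in_Delta_def by blast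
    ultimately show "0 < \<delta> k" by simp
  qed
  note bound = real_objective_le[OF \<delta> \<gamma> this]
  have "ereal (real_objective \<delta> \<gamma>) \<le> ereal (reduced_objective \<gamma>opt)"
    using bound(1) by simp
  moreover have "ereal (real_objective \<delta> \<gamma>) = ereal (reduced_objective \<gamma>opt)
      \<Longrightarrow> (\<forall>k\<in>K. \<delta> k = \<delta>opt k) \<and> (\<forall>v\<in>{1..n}. \<gamma> v = \<gamma>opt v)"
    using bound(2) by simp
  ultimately show ?thesis
    unfolding objective_eq_real[OF True] objective_opt by blast
next
  case False
  then have "\<not> \<alpha> < 1" by blast
  with alpha have "1 < \<alpha>" by simp
  from False obtain v k where "v \<in> {1..n}" "k \<in> flows K vb v" "r k * \<gamma> v * \<delta> k = 0"
    by blast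
  with \<open>1 < \<alpha>\<close> have "objective \<alpha> n K vb r \<delta> \<gamma> = -\<infinity>"
    by (rule objective_eq_minf)
  then show ?thesis using objective_opt by simp
qed

end

theorem theorem1:
  fixes n :: nat and E :: "(nat \<times> nat) set" and \<alpha> :: real
    and K :: "'k set" and r :: "'k \<Rightarrow> real" and vb :: "'k \<Rightarrow> nat"
    and \<theta> \<kappa> :: "nat \<Rightarrow> real"
  assumes tree: "rooted_tree n E"
    and alpha: "\<alpha> > 0" "\<alpha> \<noteq> 1"
    and finK: "finite K"
    and rpos: "\<forall>k\<in>K. r k > 0"
    and vbV: "\<forall>k\<in>K. vb k \<in> {1..n}"
    and nonempty: "\<forall>v\<in>{1..n}. flows K vb v \<noteq> {}"
    and kappa_def: "\<forall>v\<in>{1..n}. \<kappa> v = 1 / (1 + ((1 - \<alpha>) / phi \<alpha> K vb r v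
                       * (\<Sum>v'\<in>children E v. \<theta> v')) powr (1 / \<alpha>))"
    and theta_def: "\<forall>v\<in>{1..n}. \<theta> v = \<kappa> v powr (1 - \<alpha>) * phi \<alpha> K vb r v / (1 - \<alpha>)
                       + (1 - \<kappa> v) powr (1 - \<alpha>) * (\<Sum>v'\<in>children E v. \<theta> v')"
  shows "let \<delta>s = (\<lambda>k. r k powr (1 / \<alpha> - 1) / (\<Sum>k'\<in>flows K vb (vb k). r k' powr (1 / \<alpha> - 1)));
             \<gamma>s = (\<lambda>v. \<kappa> v * (\<Prod>v'\<in>anc E v. 1 - \<kappa> v'))
         in in_Delta n K vb \<delta>s \<and> in_convZ n E \<gamma>s
            \<and> (\<forall>\<delta> \<gamma>. in_Delta n K vb \<delta> \<and> in_convZ n E \<gamma> \<longrightarrow>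
                   objective \<alpha> n K vb r \<delta> \<gamma> \<le> objective \<alpha> n K vb r \<delta>s \<gamma>s
                 \<and> (objective \<alpha> n K vb r \<delta> \<gamma> = objective \<alpha> n K vb r \<delta>s \<gamma>s \<longrightarrow>
                     (\<forall>k\<in>K. \<delta> k = \<delta>s k) \<and> (\<forall>v\<in>{1..n}. \<gamma> v = \<gamma>s v)))"
proof -
  interpret beam_problem n E \<alpha> K r vb \<theta> \<kappa>
    by (intro beam_problem.intro beam_problem_axioms.intro rtree.intro) (fact+)
  have \<delta>_opt: "(\<lambda>k. r k powr (1 / \<alpha> - 1) / (\<Sum>k'\<in>flows K vb (vb k). r k' powr (1 / \<alpha> - 1))) = \<delta>opt"
    unfolding opt_split_def ..
  have \<gamma>_opt: "(\<lambda>v. \<kappa> v * (\<Prod>v'\<in>anc E v. 1 - \<kappa> v')) = \<gamma>opt"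
    unfolding path_product_def ..
  show ?thesis
    unfolding Let_def \<delta>_opt \<gamma>_opt using in_Delta_delta_opt in_convZ_gamma_opt objective_le_opt by blast
qed

end
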